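(* Let $c_1>0>c_2$, $L=c_1-c_2$, $t_0>0$, with $u,q_1,q_2$ as in the context. For $t\in[0,t_0]$ define $$y_l(t,\xi)=\xi+\ln L-\ln\!\Big(L+\big(c_1e^{-c_1(t-t_0)}-c_1e^{c_1t_0}-c_2e^{-c_2(t-t_0)}+c_2e^{c_2t_0}\big)e^{\xi}\Big),\quad \xi<q_1(0),$$ $$y_r(t,\xi)=\xi-\ln L+\ln\!\Big(L+\big(c_1e^{c_1(t-t_0)}-c_1e^{-c_1t_0}-c_2e^{c_2(t-t_0)}+c_2e^{-c_2t_0}\big)e^{-\xi}\Big),\quad \xi>q_2(0).$$ Then these are well defined, $y_l(0,\xi)=\xi$, $y_r(0,\xi)=\xi$, $y_l(t,\xi)<q_1(t)$, $y_r(t,\xi)>q_2(t)$, and for $0\le t<t_0$, $$\partial_t y_l(t,\xi)=u(t,y_l(t,\xi)),\qquad \partial_t y_r(t,\xi)=u(t,y_r(t,\xi)).$$ Moreover $u(t,y_l(t,\xi))$ equals $$\frac{\big(c_1^2e^{-c_1(t-t_0)}-c_2^2e^{-c_2(t-t_0)}\big)e^{\xi}}{L+\big(c_1e^{-c_1(t-t_0)}-c_1e^{c_1t_0}-c_2e^{-c_2(t-t_0)}+c_2e^{c_2t_0}\big)e^{\xi}} .$$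
   Context: For $t\neq t_0$ define $$p_1(t)=\frac{c_1-c_2e^{L(t-t_0)}}{1-e^{L(t-t_0)}},\qquad p_2(t)=\frac{c_2-c_1e^{L(t-t_0)}}{1-e^{L(t-t_0)}},$$ and for all $t$ define $$q_1(t)=\ln L+c_1(t-t_0)-\ln\big(c_1-c_2e^{L(t-t_0)}\big),\qquad q_2(t)=-\ln L+c_2(t-t_0)+\ln\big(c_1e^{L(t-t_0)}-c_2\big).$$ Set $u(t,x)=p_1(t)e^{-|x-q_1(t)|}+p_2(t)e^{-|x-q_2(t)|}$ for $x\in\mathbb R$, $t<t_0$. *)

theory Defs
  imports "HOL-Analysis.Analysis"
begin

definition p1 :: "real \<Rightarrow> real \<Rightarrow> real \<Rightarrow> real \<Rightarrow> real" where
  "p1 c1 c2 t0 t = (c1 - c2 * exp ((c1 - c2) * (t - t0))) / (1 - exp ((c1 - c2) * (t - t0)))"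

definition p2 :: "real \<Rightarrow> real \<Rightarrow> real \<Rightarrow> real \<Rightarrow> real" where
  "p2 c1 c2 t0 t = (c2 - c1 * exp ((c1 - c2) * (t - t0))) / (1 - exp ((c1 - c2) * (t - t0)))"

definition q1 :: "real \<Rightarrow> real \<Rightarrow> real \<Rightarrow> real \<Rightarrow> real" where
  "q1 c1 c2 t0 t = ln (c1 - c2) + c1 * (t - t0) - ln (c1 - c2 * exp ((c1 - c2) * (t - t0)))"

definition q2 :: "real \<Rightarrow> real \<Rightarrow> real \<Rightarrow> real \<Rightarrow> real" where
  "q2 c1 c2 t0 t = - ln (c1 - c2) + c2 * (t - t0) + ln (c1 * exp ((c1 - c2) * (t - t0)) - c2)"

definition u :: "real \<Rightarrow> real \<Rightarrow> real \<Rightarrow> real \<Rightarrow> real \<Rightarrow> real" where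
  "u c1 c2 t0 t x = p1 c1 c2 t0 t * exp (- \<bar>x - q1 c1 c2 t0 t\<bar>)
                  + p2 c1 c2 t0 t * exp (- \<bar>x - q2 c1 c2 t0 t\<bar>)"

definition yl_arg :: "real \<Rightarrow> real \<Rightarrow> real \<Rightarrow> real \<Rightarrow> real \<Rightarrow> real" where
  "yl_arg c1 c2 t0 t \<xi> = (c1 - c2) + (c1 * exp (- c1 * (t - t0)) - c1 * exp (c1 * t0)
       - c2 * exp (- c2 * (t - t0)) + c2 * exp (c2 * t0)) * exp \<xi>"

definition yr_arg :: "real \<Rightarrow> real \<Rightarrow> real \<Rightarrow> real \<Rightarrow> real \<Rightarrow> real" where
  "yr_arg c1 c2 t0 t \<xi> = (c1 - c2) + (c1 * exp (c1 * (t - t0)) - c1 * exp (- c1 * t0)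
       - c2 * exp (c2 * (t - t0)) + c2 * exp (- c2 * t0)) * exp (- \<xi>)"

definition yl :: "real \<Rightarrow> real \<Rightarrow> real \<Rightarrow> real \<Rightarrow> real \<Rightarrow> real" where
  "yl c1 c2 t0 t \<xi> = \<xi> + ln (c1 - c2) - ln (yl_arg c1 c2 t0 t \<xi>)"

definition yr :: "real \<Rightarrow> real \<Rightarrow> real \<Rightarrow> real \<Rightarrow> real \<Rightarrow> real" where
  "yr c1 c2 t0 t \<xi> = \<xi> - ln (c1 - c2) + ln (yr_arg c1 c2 t0 t \<xi>)"

end

(* Write a = e^{c1(t-t0)}, b = e^{c2(t-t0)}, L = c1 - c2, A(t) = c1/a - c2/b and B(t) = c1 a - c2 b.
   Then e^{q1} = L / A(t) and e^{q2} = B(t) / L, so q1 <= q2 by AM-GM, and to the left of q1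
   (right of q2) the two-peakon profile u is the single exponential -A'(t) e^x / L
   (resp. B'(t) e^{-x} / L).  The characteristics are explicit: e^{y_l} = L e^xi / D(t) with
   D(t) = L + (A(t) - A(0)) e^xi.  The hypothesis xi < q1(0) says A(0) e^xi < L, hence
   D(t) > A(t) e^xi > 0 and e^{y_l} < L / A(t) = e^{q1(t)}; so y_l stays left of q1, where
   u(t, y_l) = -A'(t) e^xi / D(t) = -D'(t) / D(t) is exactly the time derivative of y_l.
   The right characteristic is symmetric. *)

theory Submission
  imports Defs
begin

lemma diff_mult_pos:
  fixes c1 c2 a b :: real
  shows "c1 > 0 \<Longrightarrow> c2 < 0 \<Longrightarrow> a > 0 \<Longrightarrow> b > 0 \<Longrightarrow> c1 * a - c2 * b > 0"
  by (smt (verit) mult_pos_pos mult_neg_pos)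

lemma exp_q1:
  assumes "c1 > 0" "c2 < 0"
  shows "exp (q1 c1 c2 t0 t) = (c1 - c2) / (c1 * exp (- c1 * (t - t0)) - c2 * exp (- c2 * (t - t0)))"
proof -
  define a b where "a = exp (c1 * (t - t0))" and "b = exp (c2 * (t - t0))"
  have pos: "a > 0" "b > 0" by (auto simp: a_def b_def)
  have E: "exp ((c1 - c2) * (t - t0)) = a / b"
    by (simp add: a_def b_def left_diff_distrib exp_diff)
  have inv: "exp (- c1 * (t - t0)) = 1 / a" "exp (- c2 * (t - t0)) = 1 / b"
    by (simp_all add: a_def b_def exp_minus inverse_eq_divide)
  have "c1 * 1 - c2 * (a / b) > 0" using assms pos by (intro diff_mult_pos) auto
  then have "exp (ln (c1 - c2 * (a / b))) = c1 - c2 * (a / b)" by simp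
  then show ?thesis using assms pos
    unfolding q1_def E inv exp_add exp_diff a_def[symmetric]
    by (simp add: field_simps)
qed

lemma exp_q2:
  assumes "c1 > 0" "c2 < 0"
  shows "exp (q2 c1 c2 t0 t) = (c1 * exp (c1 * (t - t0)) - c2 * exp (c2 * (t - t0))) / (c1 - c2)"
proof -
  define a b where "a = exp (c1 * (t - t0))" and "b = exp (c2 * (t - t0))"
  have pos: "a > 0" "b > 0" by (auto simp: a_def b_def)
  have E: "exp ((c1 - c2) * (t - t0)) = a / b"
    by (simp add: a_def b_def left_diff_distrib exp_diff)
  have "c1 * (a / b) - c2 * 1 > 0" using assms pos by (intro diff_mult_pos) auto
  then have "exp (ln (c1 * (a / b) - c2)) = c1 * (a / b) - c2" by simp
  then show ?thesis using assms pos
    unfolding q2_def E exp_add exp_diff exp_minus b_def[symmetric] a_def[symmetric]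
    by (simp add: field_simps)
qed

lemma p1_eq:
  "p1 c1 c2 t0 t = (c1 * exp (c2 * (t - t0)) - c2 * exp (c1 * (t - t0)))
                   / (exp (c2 * (t - t0)) - exp (c1 * (t - t0)))"
proof -
  define a b where "a = exp (c1 * (t - t0))" and "b = exp (c2 * (t - t0))"
  have "b > 0" by (simp add: b_def)
  have E: "exp ((c1 - c2) * (t - t0)) = a / b"
    by (simp add: a_def b_def left_diff_distrib exp_diff)
  show ?thesis unfolding p1_def E a_def[symmetric] b_def[symmetric]
    using \<open>b > 0\<close> by (cases "a = b") (simp_all add: field_simps)
qed

lemma p2_eq:
  "p2 c1 c2 t0 t = (c2 * exp (c2 * (t - t0)) - c1 * exp (c1 * (t - t0)))
                   / (exp (c2 * (t - t0)) - exp (c1 * (t - t0)))"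
proof -
  define a b where "a = exp (c1 * (t - t0))" and "b = exp (c2 * (t - t0))"
  have "b > 0" by (simp add: b_def)
  have E: "exp ((c1 - c2) * (t - t0)) = a / b"
    by (simp add: a_def b_def left_diff_distrib exp_diff)
  show ?thesis unfolding p2_def E a_def[symmetric] b_def[symmetric]
    using \<open>b > 0\<close> by (cases "a = b") (simp_all add: field_simps)
qed

lemma q1_le_q2:
  assumes "c1 > 0" "c2 < 0"
  shows "q1 c1 c2 t0 t \<le> q2 c1 c2 t0 t"
proof -
  define a b where "a = exp (c1 * (t - t0))" and "b = exp (c2 * (t - t0))"
  have pos: "a > 0" "b > 0" by (auto simp: a_def b_def)
  have inv: "exp (- c1 * (t - t0)) = 1 / a" "exp (- c2 * (t - t0)) = 1 / b"
    by (simp_all add: a_def b_def exp_minus inverse_eq_divide)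
  have S: "c1 * b - c2 * a > 0" using diff_mult_pos[OF assms pos(2,1)] .
  have "(c1 * b - c2 * a) * (c1 * a - c2 * b) - (c1 - c2)^2 * (a * b) = - c1 * c2 * (a - b)^2"
    by (simp add: power2_eq_square algebra_simps)
  also have "\<dots> \<ge> 0" using assms by (simp add: mult_nonpos_nonneg mult_pos_neg less_imp_le)
  finally have "(c1 - c2) * (a * b) / (c1 * b - c2 * a) \<le> (c1 * a - c2 * b) / (c1 - c2)"
    using assms S
    by (simp add: pos_divide_le_eq pos_le_divide_eq power2_eq_square mult.commute mult.left_commute)
  moreover have "c1 * (1 / a) - c2 * (1 / b) = (c1 * b - c2 * a) / (a * b)"
    using pos by (simp add: field_simps)
  ultimately have "exp (q1 c1 c2 t0 t) \<le> exp (q2 c1 c2 t0 t)"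
    unfolding exp_q1[OF assms] exp_q2[OF assms] inv a_def[symmetric] b_def[symmetric] by simp
  then show ?thesis by simp
qed

lemma u_left_of_q1:
  assumes c: "c1 > 0" "c2 < 0" and "t \<noteq> t0" and x: "x \<le> q1 c1 c2 t0 t"
  shows "u c1 c2 t0 t x
       = (c1^2 * exp (- c1 * (t - t0)) - c2^2 * exp (- c2 * (t - t0))) * exp x / (c1 - c2)"
proof -
  define a b where "a = exp (c1 * (t - t0))" and "b = exp (c2 * (t - t0))"
  define L S T D where "L = c1 - c2" and "S = c1 * b - c2 * a" and "T = c1 * a - c2 * b"
    and "D = b - a"
  have pos: "a > 0" "b > 0" "L > 0" using c by (auto simp: a_def b_def L_def)
  have ST: "S > 0" "T > 0"
    unfolding S_def T_def using diff_mult_pos[OF c] pos by auto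
  have "c1 * (t - t0) \<noteq> c2 * (t - t0)" using assms by simp
  then have "D \<noteq> 0" by (simp add: D_def a_def b_def)
  have inv: "exp (- c1 * (t - t0)) = 1 / a" "exp (- c2 * (t - t0)) = 1 / b"
    by (simp_all add: a_def b_def exp_minus inverse_eq_divide)
  have "u c1 c2 t0 t x
      = (p1 c1 c2 t0 t / exp (q1 c1 c2 t0 t) + p2 c1 c2 t0 t / exp (q2 c1 c2 t0 t)) * exp x"
    using x order.trans[OF x q1_le_q2[OF c]] unfolding u_def by (simp add: exp_diff field_simps)
  also have "p1 c1 c2 t0 t / exp (q1 c1 c2 t0 t) + p2 c1 c2 t0 t / exp (q2 c1 c2 t0 t)
      = S / D / (L / (S / (a * b))) + (- T) / D / (T / L)"
    unfolding exp_q1[OF c] exp_q2[OF c] p1_eq p2_eq inv a_def[symmetric] b_def[symmetric]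
      L_def[symmetric] S_def[symmetric] T_def[symmetric] D_def[symmetric] using pos
    by (simp add: S_def T_def field_simps)
  also have "\<dots> = (S^2 - L^2 * (a * b)) / (D * L * (a * b))"
    using pos ST \<open>D \<noteq> 0\<close> by (simp add: field_simps power2_eq_square)
  also have "S^2 - L^2 * (a * b) = D * (c1^2 * b - c2^2 * a)"
    by (simp add: L_def S_def D_def power2_eq_square algebra_simps)
  also have "D * (c1^2 * b - c2^2 * a) / (D * L * (a * b)) = (c1^2 * (1 / a) - c2^2 * (1 / b)) / L"
    using pos \<open>D \<noteq> 0\<close> by (simp add: field_simps)
  finally show ?thesis unfolding inv L_def by simp
qed

lemma u_right_of_q2:
  assumes c: "c1 > 0" "c2 < 0" and "t \<noteq> t0" and x: "q2 c1 c2 t0 t \<le> x"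
  shows "u c1 c2 t0 t x
       = (c1^2 * exp (c1 * (t - t0)) - c2^2 * exp (c2 * (t - t0))) * exp (- x) / (c1 - c2)"
proof -
  define a b where "a = exp (c1 * (t - t0))" and "b = exp (c2 * (t - t0))"
  define L S T D where "L = c1 - c2" and "S = c1 * b - c2 * a" and "T = c1 * a - c2 * b"
    and "D = b - a"
  have pos: "a > 0" "b > 0" "L > 0" using c by (auto simp: a_def b_def L_def)
  have ST: "S > 0" "T > 0"
    unfolding S_def T_def using diff_mult_pos[OF c] pos by auto
  have "c1 * (t - t0) \<noteq> c2 * (t - t0)" using assms by simp
  then have "D \<noteq> 0" by (simp add: D_def a_def b_def)
  have inv: "exp (- c1 * (t - t0)) = 1 / a" "exp (- c2 * (t - t0)) = 1 / b"
    by (simp_all add: a_def b_def exp_minus inverse_eq_divide)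
  have "u c1 c2 t0 t x
      = (p1 c1 c2 t0 t * exp (q1 c1 c2 t0 t) + p2 c1 c2 t0 t * exp (q2 c1 c2 t0 t)) * exp (- x)"
    using x order.trans[OF q1_le_q2[OF c] x] unfolding u_def
    by (simp add: exp_diff exp_minus field_simps)
  also have "p1 c1 c2 t0 t * exp (q1 c1 c2 t0 t) + p2 c1 c2 t0 t * exp (q2 c1 c2 t0 t)
      = S / D * (L / (S / (a * b))) + (- T) / D * (T / L)"
    unfolding exp_q1[OF c] exp_q2[OF c] p1_eq p2_eq inv a_def[symmetric] b_def[symmetric]
      L_def[symmetric] S_def[symmetric] T_def[symmetric] D_def[symmetric] using pos
    by (simp add: S_def T_def field_simps)
  also have "\<dots> = (L^2 * (a * b) - T^2) / (D * L)"
    using pos ST \<open>D \<noteq> 0\<close> by (simp add: field_simps power2_eq_square)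
  also have "L^2 * (a * b) - T^2 = D * (c1^2 * a - c2^2 * b)"
    by (simp add: L_def T_def D_def power2_eq_square algebra_simps)
  also have "D * (c1^2 * a - c2^2 * b) / (D * L) = (c1^2 * a - c2^2 * b) / L"
    using \<open>D \<noteq> 0\<close> by simp
  finally show ?thesis unfolding a_def b_def L_def by simp
qed

lemma yl_arg_gt:
  assumes c: "c1 > 0" "c2 < 0" and \<xi>: "\<xi> < q1 c1 c2 t0 0"
  shows "yl_arg c1 c2 t0 t \<xi> > (c1 * exp (- c1 * (t - t0)) - c2 * exp (- c2 * (t - t0))) * exp \<xi>"
proof -
  have "exp \<xi> < exp (q1 c1 c2 t0 0)" using \<xi> by simp
  also have "\<dots> = (c1 - c2) / (c1 * exp (c1 * t0) - c2 * exp (c2 * t0))"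
    using exp_q1[OF c, of t0 0] by simp
  moreover have "c1 * exp (c1 * t0) - c2 * exp (c2 * t0) > 0" by (rule diff_mult_pos[OF c]) simp_all
  ultimately have "(c1 * exp (c1 * t0) - c2 * exp (c2 * t0)) * exp \<xi> < c1 - c2"
    by (simp add: less_divide_eq mult.commute)
  then show ?thesis unfolding yl_arg_def by (simp add: algebra_simps)
qed

lemma yr_arg_gt:
  assumes c: "c1 > 0" "c2 < 0" and \<xi>: "\<xi> > q2 c1 c2 t0 0"
  shows "yr_arg c1 c2 t0 t \<xi> > (c1 * exp (c1 * (t - t0)) - c2 * exp (c2 * (t - t0))) * exp (- \<xi>)"
proof -
  have "(c1 * exp (- c1 * t0) - c2 * exp (- c2 * t0)) / (c1 - c2) = exp (q2 c1 c2 t0 0)"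
    using exp_q2[OF c, of t0 0] by simp
  also have "\<dots> < exp \<xi>" using \<xi> by simp
  finally have "(c1 * exp (- c1 * t0) - c2 * exp (- c2 * t0)) * exp (- \<xi>) < c1 - c2"
    using c by (simp add: divide_less_eq exp_minus field_simps)
  then show ?thesis unfolding yr_arg_def by (simp add: algebra_simps)
qed

lemma yl_arg_pos:
  assumes "c1 > 0" "c2 < 0" "\<xi> < q1 c1 c2 t0 0"
  shows "yl_arg c1 c2 t0 t \<xi> > 0"
  using yl_arg_gt[OF assms, of t] diff_mult_pos[OF assms(1,2)] by (smt (verit) exp_gt_zero mult_pos_pos)

lemma yr_arg_pos:
  assumes "c1 > 0" "c2 < 0" "\<xi> > q2 c1 c2 t0 0"
  shows "yr_arg c1 c2 t0 t \<xi> > 0"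
  using yr_arg_gt[OF assms, of t] diff_mult_pos[OF assms(1,2)] by (smt (verit) exp_gt_zero mult_pos_pos)

lemma exp_yl:
  assumes "c1 > 0" "c2 < 0" "\<xi> < q1 c1 c2 t0 0"
  shows "exp (yl c1 c2 t0 t \<xi>) = (c1 - c2) * exp \<xi> / yl_arg c1 c2 t0 t \<xi>"
  using yl_arg_pos[OF assms, of t] assms(1,2) unfolding yl_def by (simp add: exp_add exp_diff)

lemma exp_yr:
  assumes "c1 > 0" "c2 < 0" "\<xi> > q2 c1 c2 t0 0"
  shows "exp (yr c1 c2 t0 t \<xi>) = exp \<xi> * yr_arg c1 c2 t0 t \<xi> / (c1 - c2)"
  using yr_arg_pos[OF assms, of t] assms(1,2) unfolding yr_def by (simp add: exp_add exp_diff)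

lemma yl_less_q1:
  assumes c: "c1 > 0" "c2 < 0" and \<xi>: "\<xi> < q1 c1 c2 t0 0"
  shows "yl c1 c2 t0 t \<xi> < q1 c1 c2 t0 t"
proof -
  define A where "A = c1 * exp (- c1 * (t - t0)) - c2 * exp (- c2 * (t - t0))"
  have "A > 0" unfolding A_def using diff_mult_pos[OF c] by simp
  have "exp (yl c1 c2 t0 t \<xi>) = (c1 - c2) * exp \<xi> / yl_arg c1 c2 t0 t \<xi>"
    by (rule exp_yl[OF assms])
  also have "\<dots> < (c1 - c2) * exp \<xi> / (A * exp \<xi>)"
  proof (rule divide_strict_left_mono)
    show "A * exp \<xi> < yl_arg c1 c2 t0 t \<xi>" using yl_arg_gt[OF assms] unfolding A_def .
    show "0 < (c1 - c2) * exp \<xi>" "0 < yl_arg c1 c2 t0 t \<xi> * (A * exp \<xi>)"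
      using c \<open>A > 0\<close> yl_arg_pos[OF assms] by simp_all
  qed
  also have "\<dots> = exp (q1 c1 c2 t0 t)"
    unfolding exp_q1[OF c] A_def by simp
  finally show ?thesis by simp
qed

lemma q2_less_yr:
  assumes c: "c1 > 0" "c2 < 0" and \<xi>: "\<xi> > q2 c1 c2 t0 0"
  shows "q2 c1 c2 t0 t < yr c1 c2 t0 t \<xi>"
proof -
  have "exp (q2 c1 c2 t0 t)
      = exp \<xi> * ((c1 * exp (c1 * (t - t0)) - c2 * exp (c2 * (t - t0))) * exp (- \<xi>)) / (c1 - c2)"
    unfolding exp_q2[OF c] by (simp add: exp_minus)
  also have "\<dots> < exp \<xi> * yr_arg c1 c2 t0 t \<xi> / (c1 - c2)"
    using yr_arg_gt[OF assms, of t] c by (intro divide_strict_right_mono) auto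
  also have "\<dots> = exp (yr c1 c2 t0 t \<xi>)"
    by (rule exp_yr[OF assms, symmetric])
  finally show ?thesis by simp
qed

lemma yl_initial: "yl c1 c2 t0 0 \<xi> = \<xi>"
  unfolding yl_def yl_arg_def by simp

lemma yr_initial: "yr c1 c2 t0 0 \<xi> = \<xi>"
  unfolding yr_def yr_arg_def by simp

lemma has_real_derivative_yl:
  assumes "c1 > 0" "c2 < 0" "\<xi> < q1 c1 c2 t0 0"
  shows "((\<lambda>s. yl c1 c2 t0 s \<xi>) has_real_derivative
     (c1^2 * exp (- c1 * (t - t0)) - c2^2 * exp (- c2 * (t - t0))) * exp \<xi> / yl_arg c1 c2 t0 t \<xi>) (at t)"
proof -
  have "((\<lambda>s. yl_arg c1 c2 t0 s \<xi>) has_real_derivative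
      - (c1^2 * exp (- c1 * (t - t0)) - c2^2 * exp (- c2 * (t - t0))) * exp \<xi>) (at t)"
    unfolding yl_arg_def
    by (rule derivative_eq_intros refl | simp add: power2_eq_square algebra_simps)+
  then show ?thesis unfolding yl_def
    using yl_arg_pos[OF assms, of t] by (auto intro!: derivative_eq_intros simp: field_simps)
qed

lemma has_real_derivative_yr:
  assumes "c1 > 0" "c2 < 0" "\<xi> > q2 c1 c2 t0 0"
  shows "((\<lambda>s. yr c1 c2 t0 s \<xi>) has_real_derivative
     (c1^2 * exp (c1 * (t - t0)) - c2^2 * exp (c2 * (t - t0))) * exp (- \<xi>) / yr_arg c1 c2 t0 t \<xi>) (at t)"
proof -
  have "((\<lambda>s. yr_arg c1 c2 t0 s \<xi>) has_real_derivative
      (c1^2 * exp (c1 * (t - t0)) - c2^2 * exp (c2 * (t - t0))) * exp (- \<xi>)) (at t)"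
    unfolding yr_arg_def
    by (rule derivative_eq_intros refl | simp add: power2_eq_square algebra_simps)+
  then show ?thesis unfolding yr_def
    using yr_arg_pos[OF assms, of t] by (auto intro!: derivative_eq_intros)
qed

lemma u_along_yl:
  assumes c: "c1 > 0" "c2 < 0" and \<xi>: "\<xi> < q1 c1 c2 t0 0" and "t \<noteq> t0"
  shows "u c1 c2 t0 t (yl c1 c2 t0 t \<xi>)
       = (c1^2 * exp (- c1 * (t - t0)) - c2^2 * exp (- c2 * (t - t0))) * exp \<xi> / yl_arg c1 c2 t0 t \<xi>"
  using u_left_of_q1[OF c \<open>t \<noteq> t0\<close> less_imp_le[OF yl_less_q1[OF c \<xi>]]] c
  unfolding exp_yl[OF c \<xi>] by simp

lemma u_along_yr:
  assumes c: "c1 > 0" "c2 < 0" and \<xi>: "\<xi> > q2 c1 c2 t0 0" and "t \<noteq> t0"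
  shows "u c1 c2 t0 t (yr c1 c2 t0 t \<xi>)
       = (c1^2 * exp (c1 * (t - t0)) - c2^2 * exp (c2 * (t - t0))) * exp (- \<xi>) / yr_arg c1 c2 t0 t \<xi>"
proof -
  have "exp (- yr c1 c2 t0 t \<xi>) = (c1 - c2) * exp (- \<xi>) / yr_arg c1 c2 t0 t \<xi>"
    unfolding exp_minus exp_yr[OF c \<xi>] by (simp add: field_simps)
  then show ?thesis
    using u_right_of_q2[OF c \<open>t \<noteq> t0\<close> less_imp_le[OF q2_less_yr[OF c \<xi>]]] c by simp
qed

theorem mainTheorem5:
  fixes c1 c2 t0 :: real
  assumes "c1 > 0" and "0 > c2" and "t0 > 0"
  shows
   "(\<forall>t\<in>{0..t0}. \<forall>\<xi>. \<xi> < q1 c1 c2 t0 0 \<longrightarrow>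
        yl_arg c1 c2 t0 t \<xi> > 0 \<and> yl c1 c2 t0 t \<xi> < q1 c1 c2 t0 t)
  \<and> (\<forall>t\<in>{0..t0}. \<forall>\<xi>. \<xi> > q2 c1 c2 t0 0 \<longrightarrow>
        yr_arg c1 c2 t0 t \<xi> > 0 \<and> yr c1 c2 t0 t \<xi> > q2 c1 c2 t0 t)
  \<and> (\<forall>\<xi>. \<xi> < q1 c1 c2 t0 0 \<longrightarrow> yl c1 c2 t0 0 \<xi> = \<xi>)
  \<and> (\<forall>\<xi>. \<xi> > q2 c1 c2 t0 0 \<longrightarrow> yr c1 c2 t0 0 \<xi> = \<xi>)
  \<and> (\<forall>t\<in>{0..<t0}. \<forall>\<xi>. \<xi> < q1 c1 c2 t0 0 \<longrightarrow>
        ((\<lambda>s. yl c1 c2 t0 s \<xi>) has_real_derivative u c1 c2 t0 t (yl c1 c2 t0 t \<xi>))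
          (at t within {0..t0}))
  \<and> (\<forall>t\<in>{0..<t0}. \<forall>\<xi>. \<xi> > q2 c1 c2 t0 0 \<longrightarrow>
        ((\<lambda>s. yr c1 c2 t0 s \<xi>) has_real_derivative u c1 c2 t0 t (yr c1 c2 t0 t \<xi>))
          (at t within {0..t0}))
  \<and> (\<forall>t\<in>{0..<t0}. \<forall>\<xi>. \<xi> < q1 c1 c2 t0 0 \<longrightarrow>
        u c1 c2 t0 t (yl c1 c2 t0 t \<xi>) =
          ((c1^2 * exp (- c1 * (t - t0)) - c2^2 * exp (- c2 * (t - t0))) * exp \<xi>)
          / ((c1 - c2) + (c1 * exp (- c1 * (t - t0)) - c1 * exp (c1 * t0)
               - c2 * exp (- c2 * (t - t0)) + c2 * exp (c2 * t0)) * exp \<xi>))"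
proof (intro conjI ballI allI impI)
  note c = assms(1,2)
  fix t \<xi> :: real
  show "yl_arg c1 c2 t0 t \<xi> > 0" "yl c1 c2 t0 t \<xi> < q1 c1 c2 t0 t" if "\<xi> < q1 c1 c2 t0 0"
    using yl_arg_pos[OF c that] yl_less_q1[OF c that] by auto
  show "yr_arg c1 c2 t0 t \<xi> > 0" "yr c1 c2 t0 t \<xi> > q2 c1 c2 t0 t" if "\<xi> > q2 c1 c2 t0 0"
    using yr_arg_pos[OF c that] q2_less_yr[OF c that] by auto
  show "yl c1 c2 t0 0 \<xi> = \<xi>" "yr c1 c2 t0 0 \<xi> = \<xi>"
    by (rule yl_initial yr_initial)+
  assume "t \<in> {0..<t0}"
  then have "t \<noteq> t0" by simp
  show "((\<lambda>s. yl c1 c2 t0 s \<xi>) has_real_derivative u c1 c2 t0 t (yl c1 c2 t0 t \<xi>))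
      (at t within {0..t0})" if "\<xi> < q1 c1 c2 t0 0"
    unfolding u_along_yl[OF c that \<open>t \<noteq> t0\<close>]
    by (rule has_field_derivative_at_within[OF has_real_derivative_yl[OF c that]])
  show "((\<lambda>s. yr c1 c2 t0 s \<xi>) has_real_derivative u c1 c2 t0 t (yr c1 c2 t0 t \<xi>))
      (at t within {0..t0})" if "\<xi> > q2 c1 c2 t0 0"
    unfolding u_along_yr[OF c that \<open>t \<noteq> t0\<close>]
    by (rule has_field_derivative_at_within[OF has_real_derivative_yr[OF c that]])
  show "u c1 c2 t0 t (yl c1 c2 t0 t \<xi>) =
          ((c1^2 * exp (- c1 * (t - t0)) - c2^2 * exp (- c2 * (t - t0))) * exp \<xi>)
          / ((c1 - c2) + (c1 * exp (- c1 * (t - t0)) - c1 * exp (c1 * t0)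
               - c2 * exp (- c2 * (t - t0)) + c2 * exp (c2 * t0)) * exp \<xi>)"
    if "\<xi> < q1 c1 c2 t0 0"
    using u_along_yl[OF c that \<open>t \<noteq> t0\<close>] unfolding yl_arg_def .
qed

end
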